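(* Let $M$ be a metrisable manifold and let $h_t:M\times\mathbb{L}_+\to M\times\mathbb{L}_+$, $t\in[0,1]$, be an isotopy of homeomorphisms. Then there exist $\alpha<\omega_1$ and an isotopy $g_t:M\to M$, $t\in[0,1]$, such that $$h_t\big(\{x\}\times[\alpha,\omega_1)\big)=\{g_t(x)\}\times[\alpha,\omega_1)$$ for every $x\in M$ and every $t\in[0,1]$.
   Context: $\mathbb{L}_+$ denotes the open long ray (the long ray with its initial point removed), whose points beyond a countable ordinal $\alpha$ are written $[\alpha,\omega_1)$. A manifold is a connected Hausdorff space each point of which has a neighbourhood homeomorphic to $\mathbb{R}^n$. An isotopy of homeomorphisms of $X$ is a continuous map $H:X\times[0,1]\to X$ such that each $h_t=H(\cdot,t)$ is a homeomorphism of $X$. *)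

theory Defs
  imports "HOL-Analysis.Analysis"
begin

definition manifold :: "'a topology \<Rightarrow> bool" where
  "manifold M \<longleftrightarrow> connected_space M \<and> Hausdorff_space M \<and>
     (\<exists>n. \<forall>x\<in>topspace M. \<exists>U. openin M U \<and> x \<in> U \<and>
          subtopology M U homeomorphic_space Euclidean_space n)"

definition isotopy :: "'a topology \<Rightarrow> ('a \<times> real \<Rightarrow> 'a) \<Rightarrow> bool" where
  "isotopy X H \<longleftrightarrow> continuous_map (prod_topology X (top_of_set {0..1})) X H \<and>
     (\<forall>t\<in>{0..1}. homeomorphic_map X X (\<lambda>x. H (x, t)))"

text \<open>The long ray is modelled as omega_1 times [0,1) with the lexicographic order,
where omega_1 is represented by a well-ordered type 'w (see the theorem's assumptions).\<close>
definition lex_less :: "'w::linorder \<times> real \<Rightarrow> 'w \<times> real \<Rightarrow> bool" where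
  "lex_less p q \<longleftrightarrow> fst p < fst q \<or> (fst p = fst q \<and> snd p < snd q)"

definition long_ray_open :: "('w::wellorder \<times> real) set" where
  "long_ray_open = {p. 0 \<le> snd p \<and> snd p < 1} - {(LEAST w. True, 0)}"

definition long_ray_top :: "('w::wellorder \<times> real) topology" where
  "long_ray_top = topology_generated_by
     ({{y \<in> long_ray_open. lex_less y p} | p. p \<in> long_ray_open} \<union>
      {{y \<in> long_ray_open. lex_less p y} | p. p \<in> long_ray_open})"

definition long_ray_tail :: "'w::wellorder \<Rightarrow> ('w \<times> real) set" where
  "long_ray_tail \<alpha> = {y \<in> long_ray_open. \<not> lex_less y (\<alpha>, 0)}"

end

theory Submission
  imports Defs
begin

text \<open>
  The long ray is modelled as \<open>'w \<times> [0,1)\<close> in the lexicographic order, where \<open>'w\<close> is a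
  well-order which is uncountable but has countable initial segments (an \<open>\<omega>\<^sub>1\<close>-like order).
  The proof follows the classical argument:

  \<^item> Every countable set of levels of \<open>'w\<close> is bounded; iterating a bound countably often and taking
    the supremum yields, for any \<open>F :: 'w \<Rightarrow> 'w\<close>, arbitrarily large levels \<open>\<alpha>\<close> closed under \<open>F\<close>.
  \<^item> Order-topological facts: open sets of the long ray contain intervals, tails \<open>[\<alpha>, \<omega>\<^sub>1)\<close> are
    closed, and the rational points of a level are dense in it.  Consequently every continuous
    map from the long ray into a metrizable space is eventually constant.
  \<^item> A connected, metrizable, locally separable space is separable, so a metrizable manifold
    \<open>M\<close> has a countable dense set \<open>D\<close>.
  \<^item> In the locale \<open>long_ray_isotopy\<close> the first coordinate of \<open>h\<^sub>t(x, y)\<close> becomes independent of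
    \<open>y\<close> above a common level (eventual constancy on the countable set \<open>D \<times> T\<close>, then continuity);
    this defines \<open>g\<^sub>t\<close>.  A level \<open>\<alpha>\<close> closed under a function bounding the levels that \<open>h\<^sub>t\<close> and
    \<open>h\<^sub>t\<^sup>-\<^sup>1\<close> reach from countably many probe points is preserved by every \<open>h\<^sub>t\<close>.  Injectivity
    of \<open>g\<^sub>t\<close> uses eventual constancy of \<open>h\<^sub>t\<^sup>-\<^sup>1\<close>, and the inverse of \<open>g\<^sub>t\<close> is read off \<open>h\<^sub>t\<^sup>-\<^sup>1\<close>.
  \<^item> Finally the main theorem instantiates the locale with the dense sets of \<open>M\<close> and \<open>[0,1]\<close>.
\<close>

section \<open>\<open>\<omega>\<^sub>1\<close>-like well-orders\<close>

definition omega1_like :: "'w::wellorder itself \<Rightarrow> bool" where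
  "omega1_like _ \<longleftrightarrow> \<not> countable (UNIV :: 'w set) \<and> (\<forall>w::'w. countable {..<w})"

lemma omega1_like_countable_atMost:
  assumes "omega1_like TYPE('w::wellorder)"
  shows "countable {..w::'w}"
proof -
  have "{..w} = insert w {..<w}" by auto
  then show ?thesis using assms by (simp add: omega1_like_def)
qed

lemma omega1_like_bounded:
  assumes "omega1_like TYPE('w::wellorder)" and "countable (S :: 'w set)"
  shows "\<exists>u. \<forall>s\<in>S. s < u"
proof -
  have "countable (\<Union>s\<in>S. {..s})"
    using assms(2) by (rule countable_UN) (rule omega1_like_countable_atMost[OF assms(1)])
  then have "(\<Union>s\<in>S. {..s}) \<noteq> UNIV"
    using assms(1) unfolding omega1_like_def by auto
  then obtain u where "u \<notin> (\<Union>s\<in>S. {..s})" by blast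
  then show ?thesis by (auto simp: not_le)
qed

lemma omega1_like_above_pair:
  assumes "omega1_like TYPE('w::wellorder)"
  shows "\<exists>u::'w. a < u \<and> b < u"
proof -
  have "countable {a, b}" by simp
  from omega1_like_bounded[OF assms this] show ?thesis by simp
qed

lemma wellorder_least_upper_bound:
  fixes S :: "'w::wellorder set"
  assumes "\<forall>s\<in>S. s < u"
  obtains \<sigma> where "\<And>s. s \<in> S \<Longrightarrow> s \<le> \<sigma>" and "\<And>v. v < \<sigma> \<Longrightarrow> \<exists>s\<in>S. v < s"
proof
  define \<sigma> where "\<sigma> = (LEAST v. \<forall>s\<in>S. s \<le> v)"
  have "\<forall>s\<in>S. s \<le> \<sigma>"
    unfolding \<sigma>_def by (rule LeastI[of _ u]) (use assms in \<open>auto intro: less_imp_le\<close>)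
  then show "s \<le> \<sigma>" if "s \<in> S" for s using that by blast
  show "\<exists>s\<in>S. v < s" if "v < \<sigma>" for v
  proof (rule ccontr)
    assume "\<not> (\<exists>s\<in>S. v < s)"
    then have "\<sigma> \<le> v" unfolding \<sigma>_def by (intro Least_le) (auto simp: not_less)
    with that show False by simp
  qed
qed

text \<open>Arbitrarily large levels are closed under a given function \<open>F\<close>: the supremum of the
  iterates of a bound for \<open>F\<close> on initial segments.\<close>

lemma omega1_like_closure_point:
  fixes F :: "'w::wellorder \<Rightarrow> 'w"
  assumes omega1: "omega1_like TYPE('w)"
  obtains \<alpha> where "\<xi>\<^sub>0 < \<alpha>" and "\<And>\<xi>. \<xi> < \<alpha> \<Longrightarrow> F \<xi> < \<alpha>"
proof -
  have "\<forall>\<xi>. \<exists>u. \<forall>s \<in> insert \<xi> (F ` {..\<xi>}). s < u"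
  proof
    fix \<xi>
    have "countable (insert \<xi> (F ` {..\<xi>}))"
      using omega1_like_countable_atMost[OF omega1] by simp
    then show "\<exists>u. \<forall>s \<in> insert \<xi> (F ` {..\<xi>}). s < u" by (rule omega1_like_bounded[OF omega1])
  qed
  then obtain F' where F': "\<forall>\<xi>. \<forall>s \<in> insert \<xi> (F ` {..\<xi>}). s < F' \<xi>"
    by (rule choice[THEN exE])
  define \<gamma> where "\<gamma> n = (F' ^^ n) \<xi>\<^sub>0" for n
  have \<gamma>_Suc: "\<gamma> (Suc n) = F' (\<gamma> n)" for n by (simp add: \<gamma>_def)
  have "countable (range \<gamma>)" by simp
  with omega1_like_bounded[OF omega1] obtain u where "\<forall>s\<in>range \<gamma>. s < u" by blast
  then obtain \<sigma> where upper: "\<And>s. s \<in> range \<gamma> \<Longrightarrow> s \<le> \<sigma>"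
    and least: "\<And>v. v < \<sigma> \<Longrightarrow> \<exists>s\<in>range \<gamma>. v < s"
    by (rule wellorder_least_upper_bound) blast+
  show ?thesis
  proof
    have "\<xi>\<^sub>0 < \<gamma> 1" using F' by (simp add: \<gamma>_def)
    then show "\<xi>\<^sub>0 < \<sigma>" using upper[of "\<gamma> 1"] by simp
    show "F \<xi> < \<sigma>" if "\<xi> < \<sigma>" for \<xi>
    proof -
      from least[OF that] obtain n where "\<xi> < \<gamma> n" by blast
      then have "F \<xi> < \<gamma> (Suc n)" using F' by (simp add: \<gamma>_Suc)
      then show ?thesis using upper[of "\<gamma> (Suc n)"] by simp
    qed
  qed
qed

section \<open>The long ray\<close>

lemma lex_less_trans: "lex_less a b \<Longrightarrow> lex_less b c \<Longrightarrow> lex_less a c"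
  unfolding lex_less_def by auto

lemma lex_less_asym: "lex_less a b \<Longrightarrow> \<not> lex_less b a"
  unfolding lex_less_def by auto

lemma lex_not_less: "\<not> lex_less a b \<Longrightarrow> a = b \<or> lex_less b a"
  unfolding lex_less_def by (cases a; cases b) auto

lemma lex_less_level: "0 \<le> snd y \<Longrightarrow> lex_less y (\<alpha>, 0) \<longleftrightarrow> fst y < \<alpha>"
  unfolding lex_less_def by auto

lemma mem_long_ray_open:
  "y \<in> long_ray_open \<longleftrightarrow> 0 \<le> snd y \<and> snd y < 1 \<and> y \<noteq> (LEAST w. True, 0)"
  by (auto simp: long_ray_open_def)

lemma level_in_long_ray_open:
  assumes "\<xi> < \<alpha>"
  shows "(\<alpha>, 0) \<in> (long_ray_open :: ('w::wellorder \<times> real) set)"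
proof -
  have "(LEAST w::'w. True) \<le> \<xi>" by (rule Least_le) simp
  then show ?thesis using assms by (auto simp: mem_long_ray_open)
qed

lemma mem_long_ray_tail: "y \<in> long_ray_tail \<alpha> \<longleftrightarrow> y \<in> long_ray_open \<and> \<alpha> \<le> fst y"
  by (auto simp: long_ray_tail_def mem_long_ray_open lex_less_level not_less)

lemma long_ray_tail_mono: "\<beta> \<le> \<alpha> \<Longrightarrow> long_ray_tail \<alpha> \<subseteq> long_ray_tail \<beta>"
  by (auto simp: mem_long_ray_tail)

text \<open>The order topology has the open long ray as carrier, since every point lies below
  another one.\<close>

lemma topspace_long_ray_top [simp]:
  "topspace (long_ray_top :: ('w::wellorder \<times> real) topology) = long_ray_open"
proof -
  have "y \<in> \<Union>({{z \<in> long_ray_open. lex_less z p} | p. p \<in> long_ray_open} \<union>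
      {{z \<in> long_ray_open. lex_less p z} | p. p \<in> long_ray_open})"
    if y: "y \<in> (long_ray_open :: ('w \<times> real) set)" for y
  proof -
    have "(fst y, (snd y + 1) / 2) \<in> long_ray_open" "lex_less y (fst y, (snd y + 1) / 2)"
      using y by (auto simp: mem_long_ray_open lex_less_def)
    then show ?thesis using y by blast
  qed
  then show ?thesis
    unfolding long_ray_top_def topology_generated_by_topspace by blast
qed

lemma openin_long_ray_below:
  "p \<in> long_ray_open \<Longrightarrow> openin long_ray_top {y \<in> long_ray_open. lex_less y p}"
  unfolding long_ray_top_def by (rule topology_generated_by_Basis) blast

lemma openin_long_ray_above:
  "p \<in> long_ray_open \<Longrightarrow> openin long_ray_top {y \<in> long_ray_open. lex_less p y}"
  unfolding long_ray_top_def by (rule topology_generated_by_Basis) blast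

lemma closedin_long_ray_atMost:
  assumes "p \<in> long_ray_open"
  shows "closedin long_ray_top {y \<in> long_ray_open. \<not> lex_less p y}"
proof -
  have "long_ray_open - {y \<in> long_ray_open. \<not> lex_less p y} = {y \<in> long_ray_open. lex_less p y}"
    by auto
  then show ?thesis
    unfolding closedin_def topspace_long_ray_top using openin_long_ray_above[OF assms] by auto
qed

lemma closedin_long_ray_tail:
  assumes "(\<alpha>, 0) \<in> long_ray_open"
  shows "closedin long_ray_top (long_ray_tail \<alpha>)"
proof -
  have "long_ray_open - long_ray_tail \<alpha> = {y \<in> long_ray_open. lex_less y (\<alpha>, 0)}"
    by (auto simp: long_ray_tail_def)
  moreover have "long_ray_tail \<alpha> \<subseteq> long_ray_open" by (auto simp: long_ray_tail_def)
  ultimately show ?thesis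
    unfolding closedin_def topspace_long_ray_top using openin_long_ray_below[OF assms] by simp
qed

lemma lex_max:
  obtains a where "a \<in> {a\<^sub>1, a\<^sub>2}" and "\<And>y. lex_less a y \<Longrightarrow> lex_less a\<^sub>1 y \<and> lex_less a\<^sub>2 y"
proof (cases "lex_less a\<^sub>1 a\<^sub>2")
  case True
  show ?thesis by (rule that[of a\<^sub>2]) (auto intro: lex_less_trans[OF True])
next
  case False
  then consider "a\<^sub>1 = a\<^sub>2" | "lex_less a\<^sub>2 a\<^sub>1" using lex_not_less by blast
  then show ?thesis
  proof cases
    case 2
    show ?thesis by (rule that[of a\<^sub>1]) (auto intro: lex_less_trans[OF 2])
  qed (rule that[of a\<^sub>1]; simp)
qed

lemma lex_min:
  obtains b where "b \<in> {b\<^sub>1, b\<^sub>2}" and "\<And>y. lex_less y b \<Longrightarrow> lex_less y b\<^sub>1 \<and> lex_less y b\<^sub>2"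
proof (cases "lex_less b\<^sub>1 b\<^sub>2")
  case True
  show ?thesis by (rule that[of b\<^sub>1]) (auto intro: lex_less_trans[OF _ True])
next
  case False
  then consider "b\<^sub>1 = b\<^sub>2" | "lex_less b\<^sub>2 b\<^sub>1" using lex_not_less by blast
  then show ?thesis
  proof cases
    case 2
    show ?thesis by (rule that[of b\<^sub>2]) (auto intro: lex_less_trans[OF _ 2])
  qed (rule that[of b\<^sub>1]; simp)
qed

lemma long_ray_point_below:
  assumes z: "z \<in> (long_ray_open :: ('w::wellorder \<times> real) set)"
  shows "\<exists>a. 0 \<le> snd a \<and> lex_less a z"
proof (cases "0 < snd z")
  case True
  then show ?thesis by (intro exI[of _ "(fst z, 0)"]) (simp add: lex_less_def)
next
  case False
  then have "snd z = 0" "fst z \<noteq> (LEAST w. True)"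
    using z by (auto simp: mem_long_ray_open) (metis prod.collapse)
  moreover have "(LEAST w::'w. True) \<le> fst z" by (rule Least_le) simp
  ultimately show ?thesis by (intro exI[of _ "(LEAST w::'w. True, 0)"]) (simp add: lex_less_def)
qed

lemma long_ray_open_interval:
  assumes "openin (long_ray_top :: ('w::wellorder \<times> real) topology) U" and "z \<in> U"
  obtains a b where "0 \<le> snd a" and "lex_less a z" and "lex_less z b"
    and "\<And>y. y \<in> long_ray_open \<Longrightarrow> lex_less a y \<Longrightarrow> lex_less y b \<Longrightarrow> y \<in> U"
proof -
  let ?interval = "\<lambda>U z a b. 0 \<le> snd a \<and> lex_less a z \<and> lex_less z b \<and>
      (\<forall>y\<in>long_ray_open. lex_less a y \<and> lex_less y b \<longrightarrow> y \<in> U)"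
  have "generate_topology_on ({{y \<in> long_ray_open. lex_less y p} | p. p \<in> long_ray_open} \<union>
      {{y \<in> long_ray_open. lex_less p y} | p. p \<in> long_ray_open}) U"
    using assms(1) unfolding long_ray_top_def openin_topology_generated_by_iff .
  then have "\<forall>z\<in>U \<inter> (long_ray_open :: ('w \<times> real) set). \<exists>a b. ?interval U z a b"
  proof induction
    case Empty
    show ?case by simp
  next
    case (Int U\<^sub>1 U\<^sub>2)
    show ?case
    proof
      fix z assume z: "z \<in> U\<^sub>1 \<inter> U\<^sub>2 \<inter> long_ray_open"
      obtain a\<^sub>1 b\<^sub>1 where 1: "?interval U\<^sub>1 z a\<^sub>1 b\<^sub>1" using Int.IH(1) z by blast
      obtain a\<^sub>2 b\<^sub>2 where 2: "?interval U\<^sub>2 z a\<^sub>2 b\<^sub>2" using Int.IH(2) z by blast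
      obtain a where a: "a \<in> {a\<^sub>1, a\<^sub>2}" "\<And>y. lex_less a y \<Longrightarrow> lex_less a\<^sub>1 y \<and> lex_less a\<^sub>2 y"
        using lex_max[of a\<^sub>1 a\<^sub>2] by blast
      obtain b where b: "b \<in> {b\<^sub>1, b\<^sub>2}" "\<And>y. lex_less y b \<Longrightarrow> lex_less y b\<^sub>1 \<and> lex_less y b\<^sub>2"
        using lex_min[of b\<^sub>1 b\<^sub>2] by blast
      have "?interval (U\<^sub>1 \<inter> U\<^sub>2) z a b"
        using 1 2 a b by auto
      then show "\<exists>a b. ?interval (U\<^sub>1 \<inter> U\<^sub>2) z a b" by blast
    qed
  next
    case (UN K)
    then show ?case by blast
  next
    case (Basis s)
    then consider p where "p \<in> long_ray_open" "s = {y \<in> long_ray_open. lex_less y p}"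
      | p where "p \<in> long_ray_open" "s = {y \<in> long_ray_open. lex_less p y}"
      by blast
    then show ?case
    proof cases
      case 1
      show ?thesis
      proof
        fix z assume z: "z \<in> s \<inter> long_ray_open"
        obtain a where "0 \<le> snd a" "lex_less a z"
          using long_ray_point_below[of z] z by blast
        then have "?interval s z a p" using 1 z by auto
        then show "\<exists>a b. ?interval s z a b" by blast
      qed
    next
      case 2
      show ?thesis
      proof
        fix z assume z: "z \<in> s \<inter> long_ray_open"
        then have "?interval s z p (fst z, snd z + 1)"
          using 2 by (auto simp: mem_long_ray_open lex_less_def)
        then show "\<exists>a b. ?interval s z a b" by blast
      qed
    qed
  qed
  moreover have "z \<in> long_ray_open"
    using assms openin_subset topspace_long_ray_top by blast
  ultimately show ?thesis using that assms(2) by blast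
qed

definition rational_level :: "'w::wellorder \<Rightarrow> ('w \<times> real) set" where
  "rational_level \<xi> = {z \<in> long_ray_open. fst z = \<xi> \<and> snd z \<in> \<rat>}"

lemma countable_rational_level: "countable (rational_level \<xi>)"
proof -
  have "rational_level \<xi> \<subseteq> (\<lambda>r. (\<xi>, r)) ` \<rat>"
    by (auto simp: rational_level_def image_iff intro: prod_eqI)
  then show ?thesis
    by (rule countable_subset) (intro countable_image countable_rat)
qed

lemma rational_level_dense:
  assumes y: "y \<in> long_ray_open"
  shows "y \<in> long_ray_top closure_of rational_level (fst y)"
  unfolding in_closure_of
proof (intro conjI allI impI)
  show "y \<in> topspace long_ray_top" using y by simp
  fix U assume U: "y \<in> U \<and> openin long_ray_top U"
  then obtain b where b: "lex_less y b"
    and sub: "\<And>z. z \<in> long_ray_open \<Longrightarrow> lex_less y z \<Longrightarrow> lex_less z b \<Longrightarrow> z \<in> U"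
    using long_ray_open_interval[of U y] by (metis lex_less_trans)
  define m where "m = (if fst b = fst y then min 1 (snd b) else 1)"
  have "snd y < m" using b y unfolding m_def lex_less_def by (auto simp: mem_long_ray_open)
  then obtain r where r: "r \<in> \<rat>" "snd y < r" "r < m" using Rats_dense_in_real by blast
  have z: "(fst y, r) \<in> long_ray_open"
    using r y by (auto simp: mem_long_ray_open m_def split: if_splits)
  moreover have "lex_less y (fst y, r)" using r(2) by (simp add: lex_less_def)
  moreover have "lex_less (fst y, r) b" using b r(3) by (auto simp: lex_less_def m_def split: if_splits)
  ultimately have "(fst y, r) \<in> U" by (rule sub)
  moreover have "(fst y, r) \<in> rational_level (fst y)" using z r(1) by (simp add: rational_level_def)
  ultimately show "\<exists>z. z \<in> rational_level (fst y) \<and> z \<in> U" by blast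
qed

lemma continuous_map_closure_in_closedin:
  assumes "continuous_map X Y f" and "closedin Y C" and "x \<in> X closure_of S"
    and "\<And>s. s \<in> S \<Longrightarrow> f s \<in> C"
  shows "f x \<in> C"
  using forall_in_closure_of[OF assms(3) assms(4) closedin_continuous_map_preimage[OF assms(1,2)]] .

lemma long_ray_closure_level_le:
  assumes \<phi>: "continuous_map Z long_ray_top \<phi>" and z: "z \<in> Z closure_of S"
    and S: "S \<subseteq> topspace Z" and \<beta>: "(\<beta>, 0) \<in> long_ray_open"
    and below: "\<And>s. s \<in> S \<Longrightarrow> fst (\<phi> s) < \<beta>"
  shows "fst (\<phi> z) \<le> \<beta>"
proof -
  have "\<phi> z \<in> {y \<in> long_ray_open. \<not> lex_less (\<beta>, 0) y}"
  proof (rule continuous_map_closure_in_closedin[OF \<phi> closedin_long_ray_atMost[OF \<beta>] z])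
    fix s assume s: "s \<in> S"
    then have "\<phi> s \<in> long_ray_open"
      using continuous_map_image_subset_topspace[OF \<phi>] S by auto
    moreover have "lex_less (\<phi> s) (\<beta>, 0)" using below[OF s] by (simp add: lex_less_def)
    ultimately show "\<phi> s \<in> {y \<in> long_ray_open. \<not> lex_less (\<beta>, 0) y}" using lex_less_asym by blast
  qed
  then show ?thesis by (auto simp: lex_less_def not_less)
qed

section \<open>Continuous maps on the long ray are eventually constant\<close>

lemma (in Metric_space) long_ray_continuous_from_below:
  fixes f :: "'w::wellorder \<times> real \<Rightarrow> 'a"
  assumes f: "continuous_map long_ray_top mtopology f"
    and \<alpha>: "(\<alpha>, 0) \<in> long_ray_open" and \<epsilon>: "0 < \<epsilon>"
  obtains \<xi> where "\<xi> < \<alpha>"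
    and "\<And>x. x \<in> long_ray_open \<Longrightarrow> \<xi> < fst x \<Longrightarrow> fst x < \<alpha> \<Longrightarrow> f x \<in> mball (f (\<alpha>, 0)) \<epsilon>"
proof -
  let ?U = "{x \<in> topspace long_ray_top. f x \<in> mball (f (\<alpha>, 0)) \<epsilon>}"
  have "openin long_ray_top ?U"
    using openin_continuous_map_preimage[OF f openin_mball] .
  moreover have "f (\<alpha>, 0) \<in> M"
    using continuous_map_image_subset_topspace[OF f] \<alpha> by auto
  then have "(\<alpha>, 0) \<in> ?U" using \<alpha> \<epsilon> by simp
  ultimately obtain a b where a: "0 \<le> snd a" "lex_less a (\<alpha>, 0)" and b: "lex_less (\<alpha>, 0) b"
    and sub: "\<And>x. x \<in> long_ray_open \<Longrightarrow> lex_less a x \<Longrightarrow> lex_less x b \<Longrightarrow> x \<in> ?U"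
    by (rule long_ray_open_interval) auto
  show ?thesis
  proof
    show "fst a < \<alpha>" using a by (simp add: lex_less_level)
    fix x assume x: "x \<in> long_ray_open" "fst a < fst x" "fst x < \<alpha>"
    have "lex_less a x" using x(2) by (simp add: lex_less_def)
    moreover have "lex_less x b"
      using x b lex_less_trans[of x "(\<alpha>, 0)" b] by (simp add: mem_long_ray_open lex_less_level)
    ultimately show "f x \<in> mball (f (\<alpha>, 0)) \<epsilon>" using sub x(1) by blast
  qed
qed

text \<open>A continuous map from the long ray into a metric space eventually oscillates less than
  \<open>\<epsilon>\<close>: otherwise witnesses of oscillation accumulate at a closure level \<open>\<alpha>\<close>, contradicting
  continuity at \<open>(\<alpha>, 0)\<close>.\<close>

lemma (in Metric_space) long_ray_eventually_close:
  fixes f :: "'w::wellorder \<times> real \<Rightarrow> 'a"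
  assumes omega1: "omega1_like TYPE('w)"
    and f: "continuous_map long_ray_top mtopology f"
    and \<epsilon>: "0 < \<epsilon>"
  shows "\<exists>\<beta>. \<beta>\<^sub>0 < \<beta> \<and> (\<forall>y\<in>long_ray_tail \<beta>. \<forall>z\<in>long_ray_tail \<beta>. d (f y) (f z) < \<epsilon>)"
proof (rule ccontr)
  assume "\<not> ?thesis"
  then have "\<forall>\<beta>. \<beta>\<^sub>0 < \<beta> \<longrightarrow>
      (\<exists>y\<in>long_ray_tail \<beta>. \<exists>z\<in>long_ray_tail \<beta>. \<epsilon> \<le> d (f y) (f z))"
    by (meson not_less)
  then have "\<forall>\<beta>. \<exists>yz. \<beta>\<^sub>0 < \<beta> \<longrightarrow> fst yz \<in> long_ray_tail \<beta> \<and> snd yz \<in> long_ray_tail \<beta> \<and>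
      \<epsilon> \<le> d (f (fst yz)) (f (snd yz))"
    by force
  then obtain w where w: "\<forall>\<beta>. \<beta>\<^sub>0 < \<beta> \<longrightarrow> fst (w \<beta>) \<in> long_ray_tail \<beta> \<and>
      snd (w \<beta>) \<in> long_ray_tail \<beta> \<and> \<epsilon> \<le> d (f (fst (w \<beta>))) (f (snd (w \<beta>)))"
    by (rule choice[THEN exE])
  have "\<forall>\<xi>. \<exists>\<beta>. \<xi> < \<beta> \<and> \<beta>\<^sub>0 < \<beta>" using omega1_like_above_pair[OF omega1] by blast
  then obtain \<beta> where \<beta>: "\<forall>\<xi>. \<xi> < \<beta> \<xi> \<and> \<beta>\<^sub>0 < \<beta> \<xi>" by (rule choice[THEN exE])
  define y where "y \<xi> = fst (w (\<beta> \<xi>))" for \<xi>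
  define z where "z \<xi> = snd (w (\<beta> \<xi>))" for \<xi>
  have "\<forall>\<xi>. \<exists>u. fst (y \<xi>) < u \<and> fst (z \<xi>) < u" using omega1_like_above_pair[OF omega1] by blast
  then obtain F where F: "\<forall>\<xi>. fst (y \<xi>) < F \<xi> \<and> fst (z \<xi>) < F \<xi>" by (rule choice[THEN exE])
  \<comment> \<open>at a level \<open>\<alpha>\<close> closed under \<open>F\<close>, the witnesses just below \<open>\<alpha>\<close> contradict continuity\<close>
  obtain \<alpha> where \<alpha>: "\<beta>\<^sub>0 < \<alpha>" and closed: "\<And>\<xi>. \<xi> < \<alpha> \<Longrightarrow> F \<xi> < \<alpha>"
    using omega1_like_closure_point[OF omega1] by blast
  obtain \<xi>' where "\<xi>' < \<alpha>" and near: "\<And>x. x \<in> long_ray_open \<Longrightarrow> \<xi>' < fst x \<Longrightarrow> fst x < \<alpha> \<Longrightarrow>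
      f x \<in> mball (f (\<alpha>, 0)) (\<epsilon> / 2)"
    by (rule long_ray_continuous_from_below[OF f level_in_long_ray_open[OF \<alpha>], of "\<epsilon> / 2"])
      (use \<epsilon> in auto)
  define \<xi> where "\<xi> = max \<xi>' \<beta>\<^sub>0"
  have \<xi>: "\<xi>' \<le> \<xi>" "\<xi> < \<alpha>" using \<open>\<xi>' < \<alpha>\<close> \<alpha> by (auto simp: \<xi>_def)
  have near_tail: "f x \<in> mball (f (\<alpha>, 0)) (\<epsilon> / 2)"
    if x: "x \<in> long_ray_tail (\<beta> \<xi>)" "fst x < F \<xi>" for x
  proof (rule near)
    show "x \<in> long_ray_open" using x by (simp add: mem_long_ray_tail)
    have "\<xi> < \<beta> \<xi>" "\<beta> \<xi> \<le> fst x" using x \<beta> by (auto simp: mem_long_ray_tail)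
    with \<xi> show "\<xi>' < fst x" by simp
    show "fst x < \<alpha>" using x closed[OF \<xi>(2)] by simp
  qed
  have tails: "y \<xi> \<in> long_ray_tail (\<beta> \<xi>)" "z \<xi> \<in> long_ray_tail (\<beta> \<xi>)"
    and far: "\<epsilon> \<le> d (f (y \<xi>)) (f (z \<xi>))"
    using w \<beta> by (auto simp: y_def z_def)
  have "f (y \<xi>) \<in> mball (f (\<alpha>, 0)) (\<epsilon> / 2)" "f (z \<xi>) \<in> mball (f (\<alpha>, 0)) (\<epsilon> / 2)"
    using near_tail tails F by auto
  then have "d (f (y \<xi>)) (f (z \<xi>)) < \<epsilon>"
    using triangle'' by fastforce
  with far show False by simp
qed

text \<open>Hence a continuous map into a metrizable space is constant on some tail beyond any
  given level (take a common bound of the levels for \<open>\<epsilon> = 1/(n+1)\<close>).\<close>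

lemma long_ray_eventually_constant:
  fixes f :: "'w::wellorder \<times> real \<Rightarrow> 'a"
  assumes omega1: "omega1_like TYPE('w)"
    and Y: "metrizable_space Y" and f: "continuous_map long_ray_top Y f"
  obtains \<beta> where "\<beta>\<^sub>0 < \<beta>" and "\<And>y. y \<in> long_ray_tail \<beta> \<Longrightarrow> f y = f (\<beta>, 0)"
proof -
  obtain Ms d where "Metric_space Ms d" and Y_eq: "Y = Metric_space.mtopology Ms d"
    using Y unfolding metrizable_space_def by blast
  then interpret Metric_space Ms d by simp
  have "\<forall>n::nat. \<exists>\<beta>. \<beta>\<^sub>0 < \<beta> \<and>
      (\<forall>y\<in>long_ray_tail \<beta>. \<forall>z\<in>long_ray_tail \<beta>. d (f y) (f z) < inverse (Suc n))"
    using long_ray_eventually_close[OF omega1 f[unfolded Y_eq]] by simp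
  then obtain B where B: "\<forall>n. \<beta>\<^sub>0 < B n \<and>
      (\<forall>y\<in>long_ray_tail (B n). \<forall>z\<in>long_ray_tail (B n). d (f y) (f z) < inverse (Suc n))"
    by (rule choice[THEN exE])
  have "countable (insert \<beta>\<^sub>0 (range B))" by simp
  with omega1_like_bounded[OF omega1] obtain \<beta> where \<beta>: "\<forall>s\<in>insert \<beta>\<^sub>0 (range B). s < \<beta>"
    by blast
  have tail: "long_ray_tail \<beta> \<subseteq> long_ray_tail (B n)" for n
    using \<beta> by (intro long_ray_tail_mono) (auto intro: less_imp_le)
  have top: "(\<beta>, 0) \<in> long_ray_tail \<beta>"
    using level_in_long_ray_open[of \<beta>\<^sub>0 \<beta>] \<beta> by (simp add: mem_long_ray_tail)
  have "f y = f (\<beta>, 0)" if y: "y \<in> long_ray_tail \<beta>" for y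
  proof (rule ccontr)
    assume "f y \<noteq> f (\<beta>, 0)"
    moreover have "f y \<in> Ms" "f (\<beta>, 0) \<in> Ms"
      using continuous_map_image_subset_topspace[OF f] y top
      by (auto simp: Y_eq mem_long_ray_tail)
    ultimately have "0 < d (f y) (f (\<beta>, 0))" by simp
    then obtain n where "inverse (real (Suc n)) < d (f y) (f (\<beta>, 0))"
      using reals_Archimedean by blast
    moreover have "d (f y) (f (\<beta>, 0)) < inverse (Suc n)"
      using B y top tail[of n] by blast
    ultimately show False by simp
  qed
  with \<beta> that show ?thesis by blast
qed

section \<open>Metrizable manifolds are separable\<close>

definition countably_covered :: "'a topology \<Rightarrow> 'a set \<Rightarrow> bool" where
  "countably_covered X A \<longleftrightarrow> (\<exists>C. countable C \<and> C \<subseteq> topspace X \<and> A \<subseteq> X closure_of C)"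

lemma countably_covered_mono:
  "countably_covered X B \<Longrightarrow> A \<subseteq> B \<Longrightarrow> countably_covered X A"
  unfolding countably_covered_def by blast

lemma countably_covered_UN:
  assumes I: "countable I" and A: "\<And>i. i \<in> I \<Longrightarrow> countably_covered X (A i)"
  shows "countably_covered X (\<Union>i\<in>I. A i)"
proof -
  have "\<forall>i\<in>I. \<exists>C. countable C \<and> C \<subseteq> topspace X \<and> A i \<subseteq> X closure_of C"
    using A unfolding countably_covered_def by blast
  then obtain C where C: "\<And>i. i \<in> I \<Longrightarrow> countable (C i) \<and> C i \<subseteq> topspace X \<and> A i \<subseteq> X closure_of C i"
    by (metis bchoice)
  have "countable (\<Union>i\<in>I. C i)" using I C by (intro countable_UN) auto
  moreover have "(\<Union>i\<in>I. C i) \<subseteq> topspace X" using C by blast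
  moreover have "A i \<subseteq> X closure_of (\<Union>i\<in>I. C i)" if "i \<in> I" for i
    using C[OF that] closure_of_mono[of "C i" "\<Union>i\<in>I. C i" X] that by blast
  ultimately show ?thesis unfolding countably_covered_def by blast
qed

lemma separable_space_iff_countably_covered:
  "separable_space X \<longleftrightarrow> countably_covered X (topspace X)"
  unfolding separable_space_def countably_covered_def
  using closure_of_subset_topspace by fastforce

lemma countably_covered_separable_open:
  assumes "openin X U" and "separable_space (subtopology X U)"
  shows "countably_covered X U"
proof -
  obtain C where C: "countable C" "C \<subseteq> topspace (subtopology X U)"
    "subtopology X U closure_of C = topspace (subtopology X U)"
    using assms(2) unfolding separable_space_def by blast
  have U: "topspace (subtopology X U) = U"
    using openin_subset[OF assms(1)] by auto
  have "U \<subseteq> X closure_of C"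
    using C(3) closure_of_subtopology_subset[of X U C] U by simp
  moreover have "C \<subseteq> topspace X" using C(2) U openin_subset[OF assms(1)] by blast
  ultimately show ?thesis using C(1) unfolding countably_covered_def by blast
qed

definition (in Metric_space) covered_neighbourhood :: "'a set \<Rightarrow> 'a set" where
  "covered_neighbourhood A =
     \<Union>{mball y r | y r. y \<in> A \<and> 0 < r \<and> countably_covered mtopology (mball y (2 * r))}"

lemma (in Metric_space) covered_neighbourhood_subset: "covered_neighbourhood A \<subseteq> M"
  unfolding covered_neighbourhood_def using mball_subset_mspace by blast

text \<open>The neighbourhood of a countably covered set is countably covered: its balls can be
  replaced by countably many balls with centres in a countable dense set and rational radii.\<close>

lemma (in Metric_space) countably_covered_covered_neighbourhood:
  assumes "countably_covered mtopology A"
  shows "countably_covered mtopology (covered_neighbourhood A)"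
proof -
  obtain C where C: "countable C" "C \<subseteq> M" "A \<subseteq> mtopology closure_of C"
    using assms unfolding countably_covered_def by auto
  define K where "K = {(c, q). c \<in> C \<and> q \<in> \<rat> \<and> countably_covered mtopology (mball c q)}"
  have "K \<subseteq> C \<times> \<rat>" unfolding K_def by blast
  then have "countable K"
    using countable_SIGMA[OF C(1) countable_rat] by (rule countable_subset)
  moreover have "countably_covered mtopology (mball (fst k) (snd k))" if "k \<in> K" for k
    using that unfolding K_def by auto
  ultimately have covered: "countably_covered mtopology (\<Union>k\<in>K. mball (fst k) (snd k))"
    by (rule countably_covered_UN)
  have "covered_neighbourhood A \<subseteq> (\<Union>k\<in>K. mball (fst k) (snd k))"
  proof
    fix z assume "z \<in> covered_neighbourhood A"
    then obtain y r where y: "y \<in> A" and r: "0 < r"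
      and big: "countably_covered mtopology (mball y (2 * r))" and z: "z \<in> mball y r"
      unfolding covered_neighbourhood_def by blast
    have "y \<in> mtopology closure_of C" using y C(3) by blast
    moreover have "y \<in> mball y (r / 4)" using z r by auto
    ultimately obtain c where c: "c \<in> C" "c \<in> mball y (r / 4)"
      unfolding in_closure_of using openin_mball by blast
    obtain q where q: "q \<in> \<rat>" "5 * r / 4 < q" "q < 7 * r / 4"
      using Rats_dense_in_real[of "5 * r / 4" "7 * r / 4"] r by auto
    have "d c y < r / 4" using c(2) commute by simp
    then have "mball c q \<subseteq> mball y (2 * r)" using q z by (intro mball_subset) auto
    then have "(c, q) \<in> K" using countably_covered_mono[OF big] c(1) q(1) by (simp add: K_def)
    moreover have "z \<in> mball c q"
      using triangle[of c y z] c(2) z \<open>d c y < r / 4\<close> q(2) by auto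
    ultimately show "z \<in> (\<Union>k\<in>K. mball (fst k) (snd k))" by force
  qed
  with covered show ?thesis by (rule countably_covered_mono)
qed

lemma (in Metric_space) covered_neighbourhood_absorbs:
  assumes z: "z \<in> M" and s: "0 < s" and covered: "countably_covered mtopology (mball z s)"
    and y: "y \<in> A" "y \<in> M" "d y z < s / 5"
  shows "mball z (s / 5) \<subseteq> covered_neighbourhood A"
proof -
  have "mball y (2 * (2 * s / 5)) \<subseteq> mball z s" using y z by (intro mball_subset) auto
  then have "countably_covered mtopology (mball y (2 * (2 * s / 5)))"
    using covered by (rule countably_covered_mono[rotated])
  then have "mball y (2 * s / 5) \<in> {mball y r | y r. y \<in> A \<and> 0 < r \<and>
      countably_covered mtopology (mball y (2 * r))}"
    by (intro CollectI exI[of _ y] exI[of _ "2 * s / 5"]) (use y(1) s in auto)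
  then have "mball y (2 * s / 5) \<subseteq> covered_neighbourhood A"
    unfolding covered_neighbourhood_def by (rule Union_upper)
  moreover have "mball z (s / 5) \<subseteq> mball y (2 * s / 5)"
    using y z by (intro mball_subset) (auto simp: commute)
  ultimately show ?thesis by blast
qed

lemma (in Metric_space) covered_neighbourhood_chain_absorbs:
  assumes ball: "\<And>x. x \<in> M \<Longrightarrow> \<exists>s>0. countably_covered mtopology (mball x s)"
    and A_sub: "\<And>k. A k \<subseteq> M" and A_Suc: "\<And>k. A (Suc k) = covered_neighbourhood (A k)"
    and z: "z \<in> M"
  obtains r where "0 < r" and "\<And>k y. y \<in> A k \<Longrightarrow> d y z < r \<Longrightarrow> mball z r \<subseteq> (\<Union>k. A k)"
proof -
  obtain s where s: "0 < s" "countably_covered mtopology (mball z s)" using ball[OF z] by blast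
  show ?thesis
  proof (rule that[of "s / 5"])
    show "0 < s / 5" using s by simp
    fix k y assume "y \<in> A k" "d y z < s / 5"
    then have "mball z (s / 5) \<subseteq> A (Suc k)"
      unfolding A_Suc using z s A_sub by (intro covered_neighbourhood_absorbs) auto
    then show "mball z (s / 5) \<subseteq> (\<Union>k. A k)" by blast
  qed
qed

lemma (in Metric_space) covered_neighbourhood_chain_open:
  assumes ball: "\<And>x. x \<in> M \<Longrightarrow> \<exists>s>0. countably_covered mtopology (mball x s)"
    and A_sub: "\<And>k. A k \<subseteq> M" and A_Suc: "\<And>k. A (Suc k) = covered_neighbourhood (A k)"
  shows "openin mtopology (\<Union>k. A k)"
  unfolding openin_mtopology
proof (intro conjI allI impI)
  show "(\<Union>k. A k) \<subseteq> M" using A_sub by blast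
  fix z assume "z \<in> (\<Union>k. A k)"
  then obtain k where k: "z \<in> A k" by blast
  with A_sub have z: "z \<in> M" by blast
  obtain r where r: "0 < r" and sub: "\<And>k y. y \<in> A k \<Longrightarrow> d y z < r \<Longrightarrow> mball z r \<subseteq> (\<Union>k. A k)"
    using covered_neighbourhood_chain_absorbs[of A, OF ball A_sub A_Suc z] by blast
  have "mball z r \<subseteq> (\<Union>k. A k)" using sub[OF k] z r by simp
  with r show "\<exists>r>0. mball z r \<subseteq> (\<Union>k. A k)" by blast
qed

lemma (in Metric_space) covered_neighbourhood_chain_closed:
  assumes ball: "\<And>x. x \<in> M \<Longrightarrow> \<exists>s>0. countably_covered mtopology (mball x s)"
    and A_sub: "\<And>k. A k \<subseteq> M" and A_Suc: "\<And>k. A (Suc k) = covered_neighbourhood (A k)"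
  shows "closedin mtopology (\<Union>k. A k)"
  unfolding closure_of_subset_eq[symmetric]
proof
  show "(\<Union>k. A k) \<subseteq> topspace mtopology" using A_sub by auto
  show "mtopology closure_of (\<Union>k. A k) \<subseteq> (\<Union>k. A k)"
  proof
    fix z assume z_cl: "z \<in> mtopology closure_of (\<Union>k. A k)"
    then have z: "z \<in> M" using closure_of_subset_topspace by fastforce
    obtain r where r: "0 < r" and sub: "\<And>k y. y \<in> A k \<Longrightarrow> d y z < r \<Longrightarrow> mball z r \<subseteq> (\<Union>k. A k)"
      using covered_neighbourhood_chain_absorbs[of A, OF ball A_sub A_Suc z] by blast
    have z_ball: "z \<in> mball z r" using z r by simp
    then obtain y where y: "y \<in> (\<Union>k. A k)" "y \<in> mball z r"
      using z_cl openin_mball unfolding in_closure_of by blast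
    then obtain k where "y \<in> A k" by blast
    moreover have "d y z < r" using y(2) commute by simp
    ultimately have "mball z r \<subseteq> (\<Union>k. A k)" by (rule sub)
    with z_ball show "z \<in> (\<Union>k. A k)" by blast
  qed
qed

text \<open>A connected, locally separable metric space is separable: the union of the iterated
  neighbourhoods of a point is countably covered, open and closed.\<close>

theorem (in Metric_space) connected_locally_separable_imp_separable:
  assumes connected: "connected_space mtopology"
    and local: "\<And>x. x \<in> M \<Longrightarrow> \<exists>U. openin mtopology U \<and> x \<in> U \<and> separable_space (subtopology mtopology U)"
  shows "separable_space mtopology"
proof (cases "M = {}")
  case True
  then show ?thesis unfolding separable_space_def topspace_mtopology by (intro exI[of _ "{}"]) auto
next
  case False
  then obtain x\<^sub>0 where x\<^sub>0: "x\<^sub>0 \<in> M" by blast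
  have ball: "\<exists>s>0. countably_covered mtopology (mball x s)" if x: "x \<in> M" for x
  proof -
    obtain U where U: "openin mtopology U" "x \<in> U" "separable_space (subtopology mtopology U)"
      using local[OF x] by blast
    obtain s where "0 < s" "mball x s \<subseteq> U" using U(1,2) openin_mtopology by blast
    then show ?thesis
      using countably_covered_mono[OF countably_covered_separable_open[OF U(1,3)]] by blast
  qed
  define A where "A k = (covered_neighbourhood ^^ k) {x\<^sub>0}" for k
  have A_Suc: "A (Suc k) = covered_neighbourhood (A k)" for k by (simp add: A_def)
  have A_sub: "A k \<subseteq> M" for k
    using x\<^sub>0 covered_neighbourhood_subset by (cases k) (auto simp: A_def)
  have A_covered: "countably_covered mtopology (A k)" for k
  proof (induction k)
    case 0
    have "{x\<^sub>0} \<subseteq> mtopology closure_of {x\<^sub>0}" using x\<^sub>0 by (intro closure_of_subset) simp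
    then show ?case using x\<^sub>0 unfolding countably_covered_def A_def by (intro exI[of _ "{x\<^sub>0}"]) auto
  next
    case (Suc k)
    then show ?case unfolding A_Suc by (rule countably_covered_covered_neighbourhood)
  qed
  have "(\<Union>k. A k) \<noteq> {}" using x\<^sub>0 by (auto simp: A_def intro: exI[of _ 0])
  with covered_neighbourhood_chain_open[of A, OF ball A_sub A_Suc]
    covered_neighbourhood_chain_closed[of A, OF ball A_sub A_Suc]
  have "(\<Union>k. A k) = M"
    using connected unfolding connected_space_clopen_in topspace_mtopology by metis
  moreover have "countably_covered mtopology (\<Union>k. A k)"
    by (rule countably_covered_UN) (auto intro: A_covered)
  ultimately show ?thesis by (simp add: separable_space_iff_countably_covered)
qed

lemma second_countable_euclidean:
  "second_countable (euclidean :: 'a::second_countable_topology topology)"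
proof -
  obtain B :: "'a set set" where B: "countable B" "topological_basis B"
    using ex_countable_basis by blast
  show ?thesis
    unfolding second_countable_def
  proof (intro exI conjI ballI allI impI)
    show "countable B" by (fact B(1))
    show "openin euclidean V" if "V \<in> B" for V using topological_basis_open[OF B(2) that] by simp
    show "\<exists>V\<in>B. x \<in> V \<and> V \<subseteq> U" if "openin euclidean U \<and> x \<in> U" for U x
      using topological_basisE[OF B(2), of U x] that by auto
  qed
qed

lemma second_countable_Euclidean_space: "second_countable (Euclidean_space n)"
  unfolding Euclidean_space_def euclidean_product_topology
  by (intro second_countable_subtopology second_countable_euclidean)

lemma manifold_separable:
  assumes manifold: "manifold X" and metrizable: "metrizable_space X"
  shows "separable_space X"
proof -
  obtain Ms d where "Metric_space Ms d" and X_eq: "X = Metric_space.mtopology Ms d"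
    using metrizable unfolding metrizable_space_def by blast
  then interpret Metric_space Ms d by simp
  obtain n where chart: "\<And>x. x \<in> topspace X \<Longrightarrow>
      \<exists>U. openin X U \<and> x \<in> U \<and> subtopology X U homeomorphic_space Euclidean_space n"
    using manifold unfolding manifold_def by blast
  have "separable_space mtopology"
  proof (rule connected_locally_separable_imp_separable)
    show "connected_space mtopology" using manifold X_eq by (simp add: manifold_def)
    fix x assume "x \<in> Ms"
    then obtain U where U: "openin X U" "x \<in> U" "subtopology X U homeomorphic_space Euclidean_space n"
      using chart X_eq by auto
    then have "separable_space (subtopology X U)"
      using homeomorphic_space_second_countability second_countable_Euclidean_space
        second_countable_imp_separable_space by blast
    with U X_eq show "\<exists>U. openin mtopology U \<and> x \<in> U \<and> separable_space (subtopology mtopology U)"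
      by blast
  qed
  with X_eq show ?thesis by simp
qed

section \<open>Isotopies of \<open>M\<close> times the long ray are eventually products\<close>

locale long_ray_isotopy =
  fixes M :: "'a topology"
    and H :: "('a \<times> ('w::wellorder \<times> real)) \<times> real \<Rightarrow> 'a \<times> ('w \<times> real)"
    and D :: "'a set" and T :: "real set"
  assumes omega1: "omega1_like TYPE('w)"
    and metrizable: "metrizable_space M"
    and D: "countable D" "D \<subseteq> topspace M" "M closure_of D = topspace M"
    and T: "countable T" "T \<subseteq> {0..1}" "top_of_set {0..1} closure_of T = {0..1}"
    and isotopy: "isotopy (prod_topology M long_ray_top) H"
begin

abbreviation X :: "('a \<times> ('w \<times> real)) topology" where
  "X \<equiv> prod_topology M long_ray_top"

abbreviation I :: "real topology" where
  "I \<equiv> top_of_set {0..1}"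

lemma topspace_X: "topspace X = topspace M \<times> long_ray_open"
  by simp

lemma H_continuous: "continuous_map (prod_topology X I) X H"
  using isotopy unfolding isotopy_def by blast

lemma H_homeomorphic: "t \<in> {0..1} \<Longrightarrow> homeomorphic_map X X (\<lambda>z. H (z, t))"
  using isotopy unfolding isotopy_def by blast

lemma H_in:
  assumes "x \<in> topspace M" "y \<in> long_ray_open" "t \<in> {0..1}"
  shows "fst (H ((x, y), t)) \<in> topspace M" and "snd (H ((x, y), t)) \<in> long_ray_open"
proof -
  have "((x, y), t) \<in> topspace (prod_topology X I)" using assms by (simp add: topspace_X)
  then have "H ((x, y), t) \<in> topspace X"
    using continuous_map_image_subset_topspace[OF H_continuous] by blast
  then show "fst (H ((x, y), t)) \<in> topspace M" and "snd (H ((x, y), t)) \<in> long_ray_open"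
    by (auto simp: topspace_X mem_Times_iff)
qed

lemma H_continuous_in_space_time:
  assumes "y \<in> long_ray_open"
  shows "continuous_map (prod_topology M I) X (\<lambda>(x, t). H ((x, y), t))"
proof -
  have "continuous_map (prod_topology M I) (prod_topology X I) (\<lambda>(x, t). ((x, y), t))"
    using assms by (auto simp: case_prod_unfold
        intro!: continuous_map_pairedI continuous_map_fst continuous_map_snd)
  from continuous_map_compose[OF this H_continuous] show ?thesis
    by (simp add: o_def case_prod_unfold)
qed

lemma H_continuous_in_height:
  assumes "x \<in> topspace M" "t \<in> {0..1}"
  shows "continuous_map long_ray_top X (\<lambda>y. H ((x, y), t))"
proof -
  have "continuous_map long_ray_top (prod_topology X I) (\<lambda>y. ((x, y), t))"
    using assms by (auto intro!: continuous_map_pairedI)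
  from continuous_map_compose[OF this H_continuous] show ?thesis by (simp add: o_def)
qed

lemma H_continuous_in_time:
  assumes "x \<in> topspace M" "y \<in> long_ray_open"
  shows "continuous_map I X (\<lambda>t. H ((x, y), t))"
proof -
  have "continuous_map I (prod_topology X I) (\<lambda>t. ((x, y), t))"
    using assms by (auto intro!: continuous_map_pairedI)
  from continuous_map_compose[OF this H_continuous] show ?thesis by (simp add: o_def)
qed

text \<open>Equality of first coordinates at two heights propagates from \<open>D \<times> T\<close> to all of
  \<open>M \<times> [0,1]\<close>, by continuity and since \<open>M\<close> is Hausdorff.\<close>

lemma fst_H_eq_by_density:
  assumes y: "y \<in> long_ray_open" and y': "y' \<in> long_ray_open"
    and on_D_T: "\<And>x t. (x, t) \<in> D \<times> T \<Longrightarrow> fst (H ((x, y), t)) = fst (H ((x, y'), t))"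
    and x: "x \<in> topspace M" and t: "t \<in> {0..1}"
  shows "fst (H ((x, y), t)) = fst (H ((x, y'), t))"
proof -
  have "(x, t) \<in> prod_topology M I closure_of (D \<times> T)"
    using x t D(3) T(3) by (simp add: closure_of_Times)
  then have "(fst \<circ> (\<lambda>(x, t). H ((x, y), t))) (x, t) = (fst \<circ> (\<lambda>(x, t). H ((x, y'), t))) (x, t)"
  proof (rule forall_in_closure_of_eq[OF _ metrizable_imp_Hausdorff_space[OF metrizable]
        continuous_map_fst_of[OF H_continuous_in_space_time[OF y]]
        continuous_map_fst_of[OF H_continuous_in_space_time[OF y']]])
    fix p assume p: "p \<in> D \<times> T"
    obtain x' t' where p_eq: "p = (x', t')" by (cases p)
    show "(fst \<circ> (\<lambda>(x, t). H ((x, y), t))) p = (fst \<circ> (\<lambda>(x, t). H ((x, y'), t))) p"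
      using on_D_T[of x' t'] p unfolding p_eq by simp
  qed
  then show ?thesis by simp
qed

lemma first_coordinate_stabilises:
  "\<exists>\<beta>. (\<beta>, 0) \<in> long_ray_open \<and> (\<forall>x\<in>topspace M. \<forall>t\<in>{0..1}. \<forall>y\<in>long_ray_tail \<beta>.
      fst (H ((x, y), t)) = fst (H ((x, (\<beta>, 0)), t)))"
proof -
  \<comment> \<open>on the countable set \<open>D \<times> T\<close> the levels of stabilisation have a common bound \<open>\<beta>\<close>\<close>
  have "\<forall>p\<in>D \<times> T. \<exists>\<beta>. (LEAST w. True) < \<beta> \<and>
      (\<forall>y\<in>long_ray_tail \<beta>. fst (H ((fst p, y), snd p)) = fst (H ((fst p, (\<beta>, 0)), snd p)))"
  proof
    fix p assume "p \<in> D \<times> T"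
    then have "fst p \<in> topspace M" "snd p \<in> {0..1}" using D(2) T(2) by auto
    from continuous_map_fst_of[OF H_continuous_in_height[OF this]]
    have "continuous_map long_ray_top M (\<lambda>y. fst (H ((fst p, y), snd p)))" by (simp add: o_def)
    then obtain \<beta> where "(LEAST w. True) < \<beta>"
      "\<And>y. y \<in> long_ray_tail \<beta> \<Longrightarrow> fst (H ((fst p, y), snd p)) = fst (H ((fst p, (\<beta>, 0)), snd p))"
      by (rule long_ray_eventually_constant[OF omega1 metrizable]) auto
    then show "\<exists>\<beta>. (LEAST w. True) < \<beta> \<and>
      (\<forall>y\<in>long_ray_tail \<beta>. fst (H ((fst p, y), snd p)) = fst (H ((fst p, (\<beta>, 0)), snd p)))"
      by blast
  qed
  then obtain B where B: "\<forall>p\<in>D \<times> T. (LEAST w. True) < B p \<and>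
      (\<forall>y\<in>long_ray_tail (B p). fst (H ((fst p, y), snd p)) = fst (H ((fst p, (B p, 0)), snd p)))"
    by (rule bchoice[THEN exE])
  have "countable (insert (LEAST w. True) (B ` (D \<times> T)))" using D(1) T(1) by simp
  with omega1_like_bounded[OF omega1]
  obtain \<beta> where \<beta>: "\<forall>s\<in>insert (LEAST w. True) (B ` (D \<times> T)). s < \<beta>" by blast
  have \<beta>_tail: "(\<beta>, 0) \<in> long_ray_tail \<beta>"
    using level_in_long_ray_open[of "LEAST w. True" \<beta>] \<beta> by (simp add: mem_long_ray_tail)
  have on_D_T: "fst (H ((x, y), t)) = fst (H ((x, (\<beta>, 0)), t))"
    if xt: "(x, t) \<in> D \<times> T" and y: "y \<in> long_ray_tail \<beta>" for x t y
  proof -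
    have tail: "long_ray_tail \<beta> \<subseteq> long_ray_tail (B (x, t))"
      using \<beta> xt by (intro long_ray_tail_mono) (auto intro: less_imp_le)
    have "\<forall>y\<in>long_ray_tail (B (x, t)). fst (H ((x, y), t)) = fst (H ((x, (B (x, t), 0)), t))"
      using bspec[OF B xt] by simp
    then show ?thesis using tail y \<beta>_tail by (metis subsetD)
  qed
  \<comment> \<open>and by density of \<open>D \<times> T\<close> everywhere\<close>
  have "fst (H ((x, y), t)) = fst (H ((x, (\<beta>, 0)), t))"
    if x: "x \<in> topspace M" and t: "t \<in> {0..1}" and y: "y \<in> long_ray_tail \<beta>" for x t y
  proof (rule fst_H_eq_by_density[OF _ _ _ x t])
    show "y \<in> long_ray_open" "(\<beta>, 0) \<in> long_ray_open"
      using y \<beta>_tail by (simp_all add: mem_long_ray_tail)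
    show "fst (H ((x', y), t')) = fst (H ((x', (\<beta>, 0)), t'))" if "(x', t') \<in> D \<times> T" for x' t'
      using on_D_T[OF that y] .
  qed
  moreover have "(\<beta>, 0) \<in> long_ray_open" using \<beta>_tail by (simp add: mem_long_ray_tail)
  ultimately show ?thesis by blast
qed

definition base_level :: 'w where
  "base_level = (SOME \<beta>. (\<beta>, 0) \<in> long_ray_open \<and> (\<forall>x\<in>topspace M. \<forall>t\<in>{0..1}.
      \<forall>y\<in>long_ray_tail \<beta>. fst (H ((x, y), t)) = fst (H ((x, (\<beta>, 0)), t))))"

definition G :: "'a \<times> real \<Rightarrow> 'a" where
  "G = (\<lambda>(x, t). fst (H ((x, (base_level, 0)), t)))"

lemma base_level_in: "(base_level, 0) \<in> long_ray_open"
  using someI_ex[OF first_coordinate_stabilises] unfolding base_level_def by blast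

lemma fst_H_tail:
  assumes "x \<in> topspace M" "t \<in> {0..1}" "y \<in> long_ray_tail \<alpha>" "base_level \<le> \<alpha>"
  shows "fst (H ((x, y), t)) = G (x, t)"
proof -
  have "y \<in> long_ray_tail base_level" using assms(3,4) long_ray_tail_mono by blast
  then show ?thesis
    using someI_ex[OF first_coordinate_stabilises] assms(1,2)
    unfolding base_level_def[symmetric] G_def by auto
qed

lemma G_in: "x \<in> topspace M \<Longrightarrow> t \<in> {0..1} \<Longrightarrow> G (x, t) \<in> topspace M"
  using H_in(1) base_level_in by (simp add: G_def)

lemma G_continuous: "continuous_map (prod_topology M I) M G"
  using continuous_map_fst_of[OF H_continuous_in_space_time[OF base_level_in]]
  by (simp add: G_def o_def case_prod_unfold)

definition Hinv :: "real \<Rightarrow> 'a \<times> ('w \<times> real) \<Rightarrow> 'a \<times> ('w \<times> real)" where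
  "Hinv t = (SOME g. homeomorphic_maps X X (\<lambda>z. H (z, t)) g)"

lemma Hinv: "t \<in> {0..1} \<Longrightarrow> homeomorphic_maps X X (\<lambda>z. H (z, t)) (Hinv t)"
  unfolding Hinv_def using H_homeomorphic homeomorphic_map_maps by (metis someI_ex)

lemma Hinv_continuous: "t \<in> {0..1} \<Longrightarrow> continuous_map X X (Hinv t)"
  using Hinv unfolding homeomorphic_maps_def by blast

lemma H_Hinv: "t \<in> {0..1} \<Longrightarrow> z \<in> topspace X \<Longrightarrow> H (Hinv t z, t) = z"
  using Hinv unfolding homeomorphic_maps_def by blast

lemma Hinv_H: "t \<in> {0..1} \<Longrightarrow> z \<in> topspace X \<Longrightarrow> Hinv t (H (z, t)) = z"
  using Hinv unfolding homeomorphic_maps_def by blast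

lemma Hinv_in: "t \<in> {0..1} \<Longrightarrow> z \<in> topspace X \<Longrightarrow> Hinv t z \<in> topspace X"
  using continuous_map_image_subset_topspace[OF Hinv_continuous] by blast

definition probe_levels :: "'w \<Rightarrow> 'w set" where
  "probe_levels \<xi> =
     (\<lambda>(x, z, t). fst (snd (H ((x, z), t)))) ` (D \<times> rational_level \<xi> \<times> T) \<union>
     (\<lambda>(x, z, t). fst (snd (Hinv t (x, z)))) ` (D \<times> rational_level \<xi> \<times> T)"

definition level_bound :: "'w \<Rightarrow> 'w" where
  "level_bound \<xi> = (SOME u. \<forall>s\<in>insert \<xi> (probe_levels \<xi>). s < u)"

definition good_level :: "'w \<Rightarrow> bool" where
  "good_level \<alpha> \<longleftrightarrow> (\<forall>\<xi><\<alpha>. level_bound \<xi> < \<alpha>)"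

lemma level_bound: "\<forall>s\<in>insert \<xi> (probe_levels \<xi>). s < level_bound \<xi>"
proof -
  have "countable (D \<times> rational_level \<xi> \<times> T)"
    using D(1) T(1) countable_rational_level by (intro countable_SIGMA) auto
  then have "countable (insert \<xi> (probe_levels \<xi>))"
    unfolding probe_levels_def by simp
  then show ?thesis
    unfolding level_bound_def by (rule someI_ex[OF omega1_like_bounded[OF omega1]])
qed

lemma level_bound_level: "(level_bound \<xi>, 0) \<in> long_ray_open"
  using level_bound by (intro level_in_long_ray_open[of \<xi>]) blast

lemma level_bound_H:
  assumes "x \<in> D" "z \<in> rational_level \<xi>" "t \<in> T"
  shows "fst (snd (H ((x, z), t))) < level_bound \<xi>"
proof -
  have "(x, z, t) \<in> D \<times> rational_level \<xi> \<times> T" using assms by simp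
  then have "(\<lambda>(x, z, t). fst (snd (H ((x, z), t)))) (x, z, t) \<in> probe_levels \<xi>"
    unfolding probe_levels_def by (intro UnI1 imageI)
  then show ?thesis using level_bound[of \<xi>] by simp
qed

lemma level_bound_Hinv:
  assumes "x \<in> D" "z \<in> rational_level \<xi>" "t \<in> T"
  shows "fst (snd (Hinv t (x, z))) < level_bound \<xi>"
proof -
  have "(x, z, t) \<in> D \<times> rational_level \<xi> \<times> T" using assms by simp
  then have "(\<lambda>(x, z, t). fst (snd (Hinv t (x, z)))) (x, z, t) \<in> probe_levels \<xi>"
    unfolding probe_levels_def by (intro UnI2 imageI)
  then show ?thesis using level_bound[of \<xi>] by simp
qed

lemma good_level_above: "\<exists>\<alpha>. \<beta> < \<alpha> \<and> good_level \<alpha>"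
  using omega1_like_closure_point[OF omega1, of \<beta> level_bound] unfolding good_level_def by blast

lemma rational_level_subset: "rational_level \<xi> \<subseteq> long_ray_open"
  by (auto simp: rational_level_def)

text \<open>\<open>h\<^sub>t\<close> maps points below a good level \<open>\<alpha>\<close> below \<open>\<alpha>\<close>: by density of the probes and
  continuity their images stay below \<open>(level_bound \<xi>, 0)\<close>.\<close>

lemma H_below_good_level:
  assumes good: "good_level \<alpha>" and x: "x \<in> topspace M" and t: "t \<in> {0..1}"
    and y: "y \<in> long_ray_open" and y_below: "fst y < \<alpha>"
  shows "fst (snd (H ((x, y), t))) < \<alpha>"
proof -
  let ?\<xi> = "fst y"
  have "((x, y), t) \<in> prod_topology X I closure_of ((D \<times> rational_level ?\<xi>) \<times> T)"
    using x t D(3) T(3) rational_level_dense[OF y] by (simp add: closure_of_Times)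
  then have "fst ((snd \<circ> H) ((x, y), t)) \<le> level_bound ?\<xi>"
  proof (rule long_ray_closure_level_le[OF continuous_map_snd_of[OF H_continuous]])
    show "(D \<times> rational_level ?\<xi>) \<times> T \<subseteq> topspace (prod_topology X I)"
      using D(2) T(2) rational_level_subset by auto
    show "(level_bound ?\<xi>, 0) \<in> long_ray_open" by (rule level_bound_level)
    show "fst ((snd \<circ> H) p) < level_bound ?\<xi>" if "p \<in> (D \<times> rational_level ?\<xi>) \<times> T" for p
      using that level_bound_H by auto
  qed
  also have "level_bound ?\<xi> < \<alpha>" using good y_below by (simp add: good_level_def)
  finally show ?thesis by simp
qed

lemma Hinv_below_good_level:
  assumes good: "good_level \<alpha>" and t: "t \<in> T" and z: "z \<in> topspace X"
    and z_below: "fst (snd z) < \<alpha>"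
  shows "fst (snd (Hinv t z)) < \<alpha>"
proof -
  let ?\<xi> = "fst (snd z)"
  have t01: "t \<in> {0..1}" using t T(2) by blast
  have "z \<in> X closure_of (D \<times> rational_level ?\<xi>)"
    using z D(3) rational_level_dense[of "snd z"] by (auto simp: closure_of_Times mem_Times_iff)
  then have "fst ((snd \<circ> Hinv t) z) \<le> level_bound ?\<xi>"
  proof (rule long_ray_closure_level_le[OF continuous_map_snd_of[OF Hinv_continuous[OF t01]]])
    show "D \<times> rational_level ?\<xi> \<subseteq> topspace X"
      using D(2) rational_level_subset by auto
    show "(level_bound ?\<xi>, 0) \<in> long_ray_open" by (rule level_bound_level)
    show "fst ((snd \<circ> Hinv t) p) < level_bound ?\<xi>" if "p \<in> D \<times> rational_level ?\<xi>" for p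
      using that level_bound_Hinv[OF _ _ t] by auto
  qed
  also have "level_bound ?\<xi> < \<alpha>" using good z_below by (simp add: good_level_def)
  finally show ?thesis by simp
qed

lemma H_preserves_tail:
  assumes good: "good_level \<alpha>" and \<alpha>: "(\<alpha>, 0) \<in> long_ray_open"
    and x: "x \<in> topspace M" and t: "t \<in> {0..1}" and y: "y \<in> long_ray_open"
  shows "snd (H ((x, y), t)) \<in> long_ray_tail \<alpha> \<longleftrightarrow> y \<in> long_ray_tail \<alpha>"
proof
  assume "snd (H ((x, y), t)) \<in> long_ray_tail \<alpha>"
  then show "y \<in> long_ray_tail \<alpha>"
    using H_below_good_level[OF good x t y] y by (auto simp: mem_long_ray_tail not_le[symmetric])
next
  assume y_tail: "y \<in> long_ray_tail \<alpha>"
  \<comment> \<open>for times in \<open>T\<close>, a point of the tail cannot be sent below \<open>\<alpha>\<close>, since \<open>Hinv\<close> would send it back\<close>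
  have on_T: "(snd \<circ> (\<lambda>t. H ((x, y), t))) s \<in> long_ray_tail \<alpha>" if s: "s \<in> T" for s
  proof (rule ccontr)
    have s01: "s \<in> {0..1}" using s T(2) by blast
    have z: "H ((x, y), s) \<in> topspace X" using H_in[OF x y s01] by (simp add: mem_Times_iff)
    assume "(snd \<circ> (\<lambda>t. H ((x, y), t))) s \<notin> long_ray_tail \<alpha>"
    then have "fst (snd (H ((x, y), s))) < \<alpha>"
      using H_in(2)[OF x y s01] by (auto simp: mem_long_ray_tail not_le)
    with z have "fst (snd (Hinv s (H ((x, y), s)))) < \<alpha>"
      by (rule Hinv_below_good_level[OF good s])
    moreover have "Hinv s (H ((x, y), s)) = (x, y)"
      using Hinv_H[OF s01, of "(x, y)"] x y by simp
    ultimately show False using y_tail by (auto simp: mem_long_ray_tail)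
  qed
  \<comment> \<open>and the tail is closed while \<open>T\<close> is dense in the time interval\<close>
  have "t \<in> I closure_of T" using t T(3) by simp
  from continuous_map_closure_in_closedin[OF continuous_map_snd_of[OF H_continuous_in_time[OF x y]]
      closedin_long_ray_tail[OF \<alpha>] this on_T]
  show "snd (H ((x, y), t)) \<in> long_ray_tail \<alpha>" by simp
qed

lemma H_on_tail:
  assumes good: "good_level \<alpha>" and base: "base_level < \<alpha>"
    and x: "x \<in> topspace M" and t: "t \<in> {0..1}" and y: "y \<in> long_ray_tail \<alpha>"
  shows "H ((x, y), t) = (G (x, t), snd (H ((x, y), t)))"
    and "snd (H ((x, y), t)) \<in> long_ray_tail \<alpha>"
proof -
  have \<alpha>: "(\<alpha>, 0) \<in> long_ray_open" using level_in_long_ray_open[OF base] .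
  have "fst (H ((x, y), t)) = G (x, t)"
    using fst_H_tail[OF x t y] base by simp
  then show "H ((x, y), t) = (G (x, t), snd (H ((x, y), t)))" by (metis prod.collapse)
  show "snd (H ((x, y), t)) \<in> long_ray_tail \<alpha>"
    using H_preserves_tail[OF good \<alpha> x t] y by (simp add: mem_long_ray_tail)
qed

lemma Hinv_on_tail:
  assumes good: "good_level \<alpha>" and base: "base_level < \<alpha>"
    and z: "z \<in> topspace M" and t: "t \<in> {0..1}" and u: "u \<in> long_ray_tail \<alpha>"
  shows "fst (Hinv t (z, u)) \<in> topspace M" and "snd (Hinv t (z, u)) \<in> long_ray_tail \<alpha>"
    and "G (fst (Hinv t (z, u)), t) = z"
proof -
  have \<alpha>: "(\<alpha>, 0) \<in> long_ray_open" using level_in_long_ray_open[OF base] .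
  have zu: "(z, u) \<in> topspace X" using z u by (simp add: mem_long_ray_tail)
  obtain x' y' where xy: "Hinv t (z, u) = (x', y')" by (cases "Hinv t (z, u)")
  have x': "x' \<in> topspace M" and y': "y' \<in> long_ray_open"
    using Hinv_in[OF t zu] xy by auto
  have H_xy: "H ((x', y'), t) = (z, u)" using H_Hinv[OF t zu] xy by simp
  then have y'_tail: "y' \<in> long_ray_tail \<alpha>"
    using H_preserves_tail[OF good \<alpha> x' t y'] u by simp
  moreover have "G (x', t) = z"
    using H_on_tail(1)[OF good base x' t y'_tail] H_xy by simp
  ultimately show "fst (Hinv t (z, u)) \<in> topspace M" "snd (Hinv t (z, u)) \<in> long_ray_tail \<alpha>"
    "G (fst (Hinv t (z, u)), t) = z"
    using x' xy by simp_all
qed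

text \<open>\<open>g\<^sub>t\<close> is injective: all preimages of \<open>w\<close> are recovered as the eventual value of the
  first coordinate of \<open>h\<^sub>t\<^sup>-\<^sup>1\<close> over \<open>w\<close>.\<close>

lemma G_injective:
  assumes x: "x \<in> topspace M" and x': "x' \<in> topspace M" and t: "t \<in> {0..1}"
    and eq: "G (x, t) = G (x', t)"
  shows "x = x'"
proof -
  define w where "w = G (x, t)"
  have w: "w \<in> topspace M" using G_in[OF x t] by (simp add: w_def)
  have "continuous_map long_ray_top X (Hinv t \<circ> (\<lambda>y. (w, y)))"
    using w by (intro continuous_map_compose[OF _ Hinv_continuous[OF t]] continuous_map_pairedI) auto
  from continuous_map_fst_of[OF this]
  have "continuous_map long_ray_top M (\<lambda>y. fst (Hinv t (w, y)))" by (simp add: o_def)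
  then obtain \<gamma> where \<gamma>: "base_level < \<gamma>"
    and const: "\<And>y. y \<in> long_ray_tail \<gamma> \<Longrightarrow> fst (Hinv t (w, y)) = fst (Hinv t (w, (\<gamma>, 0)))"
    by (rule long_ray_eventually_constant[OF omega1 metrizable]) auto
  obtain \<alpha> where "\<gamma> < \<alpha>" and good: "good_level \<alpha>" using good_level_above by blast
  with \<gamma> have base: "base_level < \<alpha>" by simp
  have \<alpha>_tail: "(\<alpha>, 0) \<in> long_ray_tail \<alpha>"
    using level_in_long_ray_open[OF base] by (simp add: mem_long_ray_tail)
  have recover: "v = fst (Hinv t (w, (\<gamma>, 0)))" if v: "v \<in> topspace M" "G (v, t) = w" for v
  proof -
    let ?u = "snd (H ((v, (\<alpha>, 0)), t))"
    have u: "?u \<in> long_ray_tail \<alpha>" and H_v: "H ((v, (\<alpha>, 0)), t) = (w, ?u)"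
      using H_on_tail[OF good base v(1) t \<alpha>_tail] v(2) by simp_all
    have "Hinv t (w, ?u) = (v, (\<alpha>, 0))"
      using Hinv_H[OF t, of "(v, (\<alpha>, 0))"] H_v v(1) \<alpha>_tail by (simp add: mem_long_ray_tail)
    moreover have "?u \<in> long_ray_tail \<gamma>"
      using u \<open>\<gamma> < \<alpha>\<close> long_ray_tail_mono[of \<gamma> \<alpha>] by (auto intro: less_imp_le)
    ultimately show ?thesis using const by fastforce
  qed
  show ?thesis using recover[OF x] recover[OF x'] eq by (simp add: w_def)
qed

lemma G_homeomorphic:
  assumes t: "t \<in> {0..1}"
  shows "homeomorphic_map M M (\<lambda>x. G (x, t))"
proof -
  obtain \<alpha> where base: "base_level < \<alpha>" and good: "good_level \<alpha>" using good_level_above by blast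
  have \<alpha>_tail: "(\<alpha>, 0) \<in> long_ray_tail \<alpha>"
    using level_in_long_ray_open[OF base] by (simp add: mem_long_ray_tail)
  note Hinv_\<alpha> = Hinv_on_tail[OF good base _ t \<alpha>_tail]
  have "homeomorphic_maps M M (\<lambda>x. G (x, t)) (\<lambda>z. fst (Hinv t (z, (\<alpha>, 0))))"
    unfolding homeomorphic_maps_def
  proof (intro conjI ballI)
    have "continuous_map M (prod_topology M I) (\<lambda>x. (x, t))"
      using t by (auto intro: continuous_map_pairedI)
    from continuous_map_compose[OF this G_continuous]
    show "continuous_map M M (\<lambda>x. G (x, t))" by (simp add: o_def)
    have "continuous_map M X (Hinv t \<circ> (\<lambda>z. (z, (\<alpha>, 0))))"
      using \<alpha>_tail by (intro continuous_map_compose[OF _ Hinv_continuous[OF t]] continuous_map_pairedI)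
        (auto simp: mem_long_ray_tail)
    from continuous_map_fst_of[OF this]
    show "continuous_map M M (\<lambda>z. fst (Hinv t (z, (\<alpha>, 0))))" by (simp add: o_def)
  next
    fix x assume x: "x \<in> topspace M"
    have "G (fst (Hinv t (G (x, t), (\<alpha>, 0))), t) = G (x, t)"
      using Hinv_\<alpha>(3)[OF G_in[OF x t]] .
    then show "fst (Hinv t (G (x, t), (\<alpha>, 0))) = x"
      using G_injective[OF Hinv_\<alpha>(1)[OF G_in[OF x t]] x t] by simp
  next
    fix z assume "z \<in> topspace M"
    then show "G (fst (Hinv t (z, (\<alpha>, 0))), t) = z" by (rule Hinv_\<alpha>(3))
  qed
  then show ?thesis using homeomorphic_map_maps by blast
qed

lemma G_isotopy: "isotopy M G"
  unfolding isotopy_def using G_continuous G_homeomorphic by blast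

lemma H_tail_image:
  assumes good: "good_level \<alpha>" and base: "base_level < \<alpha>"
    and x: "x \<in> topspace M" and t: "t \<in> {0..1}"
  shows "(\<lambda>p. H (p, t)) ` ({x} \<times> long_ray_tail \<alpha>) = {G (x, t)} \<times> long_ray_tail \<alpha>"
proof (intro equalityI subsetI)
  fix w assume "w \<in> (\<lambda>p. H (p, t)) ` ({x} \<times> long_ray_tail \<alpha>)"
  then obtain y where y: "y \<in> long_ray_tail \<alpha>" and w: "w = H ((x, y), t)" by auto
  show "w \<in> {G (x, t)} \<times> long_ray_tail \<alpha>"
    using H_on_tail[OF good base x t y] w by (metis SigmaI singletonI)
next
  fix w assume "w \<in> {G (x, t)} \<times> long_ray_tail \<alpha>"
  then obtain u where u: "u \<in> long_ray_tail \<alpha>" and w: "w = (G (x, t), u)" by auto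
  note Hinv_u = Hinv_on_tail[OF good base G_in[OF x t] t u]
  have "fst (Hinv t w) = x"
    using G_injective[OF Hinv_u(1) x t Hinv_u(3)] w by simp
  then have "Hinv t w = (x, snd (Hinv t w))" by (metis prod.collapse)
  moreover have "H (Hinv t w, t) = w"
    using H_Hinv[OF t] w G_in[OF x t] u by (simp add: mem_long_ray_tail)
  ultimately show "w \<in> (\<lambda>p. H (p, t)) ` ({x} \<times> long_ray_tail \<alpha>)"
    using Hinv_u(2) w by (metis SigmaI image_eqI singletonI)
qed

theorem tail_isotopy:
  "\<exists>\<alpha> G. isotopy M G \<and> (\<forall>x\<in>topspace M. \<forall>t\<in>{0..1}.
     (\<lambda>p. H (p, t)) ` ({x} \<times> long_ray_tail \<alpha>) = {G (x, t)} \<times> long_ray_tail \<alpha>)"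
proof -
  obtain \<alpha> where "base_level < \<alpha>" and "good_level \<alpha>" using good_level_above by blast
  then show ?thesis using G_isotopy H_tail_image by blast
qed

end

theorem corollary2p3:
  fixes M :: "'a topology"
    and H :: "('a \<times> ('w::wellorder \<times> real)) \<times> real \<Rightarrow> 'a \<times> ('w \<times> real)"
  assumes omega1_uncountable: "\<not> countable (UNIV :: 'w set)"
    and omega1_segments: "\<forall>w::'w. countable {..<w}"
    and "manifold M" and "metrizable_space M"
    and "isotopy (prod_topology M long_ray_top) H"
  shows "\<exists>(\<alpha>::'w) G. isotopy M G \<and>
           (\<forall>x\<in>topspace M. \<forall>t\<in>{0..1}.
              (\<lambda>p. H (p, t)) ` ({x} \<times> long_ray_tail \<alpha>) = {G (x, t)} \<times> long_ray_tail \<alpha>)"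
proof -
  have omega1: "omega1_like TYPE('w)"
    using omega1_uncountable omega1_segments by (simp add: omega1_like_def)
  obtain D where D: "countable D" "D \<subseteq> topspace M" "M closure_of D = topspace M"
    using manifold_separable[OF assms(3,4)] unfolding separable_space_def by blast
  have "separable_space (top_of_set {0..1::real})"
    by (intro second_countable_imp_separable_space second_countable_subtopology
        second_countable_euclidean)
  then obtain T where "countable T" "T \<subseteq> topspace (top_of_set {0..1::real})"
    "top_of_set {0..1} closure_of T = topspace (top_of_set {0..1::real})"
    unfolding separable_space_def by blast
  then have T: "countable T" "T \<subseteq> {0..1}" "top_of_set {0..1} closure_of T = {0..1}"
    by simp_all
  interpret long_ray_isotopy M H D T
    using omega1 assms(4,5) D T by unfold_locales
  show ?thesis by (rule tail_isotopy)
qed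

end
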